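(* Let $k$ be a positive integer and $\mathbb{A}$ an alphabet with exactly $k$ letters. The number of extremal $XY_1XY_2X$-avoiding words over $\mathbb{A}$ is $\frac{(2k)!}{2^k}$.
   Context: A word is a finite sequence of letters. A factor of $W$ is a word $U$ with $W=W_1UW_2$ for some (possibly empty) words $W_1,W_2$. A word $W$ contains the pattern $XY_1XY_2X$ if some factor of $W$ can be written as $AB_1AB_2A$ with $A,B_1,B_2$ nonempty words (not necessarily distinct from one another); otherwise $W$ avoids $XY_1XY_2X$. An extension of a word $W$ over $\mathbb{A}$ is any word $W_1xW_2$ with $W=W_1W_2$ ($W_1,W_2$ possibly empty) and $x\in\mathbb{A}$. A word over $\mathbb{A}$ is extremal $XY_1XY_2X$-avoiding if it avoids $XY_1XY_2X$ and every extension of it contains $XY_1XY_2X$. *)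

theory Defs
  imports Complex_Main
begin

definition is_factor :: "'a list \<Rightarrow> 'a list \<Rightarrow> bool" where
  "is_factor u w \<longleftrightarrow> (\<exists>w1 w2. w = w1 @ u @ w2)"

definition contains_XYXYX :: "'a list \<Rightarrow> bool" where
  "contains_XYXYX w \<longleftrightarrow>
     (\<exists>a b1 b2. a \<noteq> [] \<and> b1 \<noteq> [] \<and> b2 \<noteq> [] \<and> is_factor (a @ b1 @ a @ b2 @ a) w)"

definition avoids_XYXYX :: "'a list \<Rightarrow> bool" where
  "avoids_XYXYX w \<longleftrightarrow> \<not> contains_XYXYX w"

definition is_extension :: "'a set \<Rightarrow> 'a list \<Rightarrow> 'a list \<Rightarrow> bool" where
  "is_extension A w v \<longleftrightarrow> (\<exists>w1 w2 x. w = w1 @ w2 \<and> x \<in> A \<and> v = w1 @ [x] @ w2)"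

definition extremal_XYXYX :: "'a set \<Rightarrow> 'a list \<Rightarrow> bool" where
  "extremal_XYXYX A w \<longleftrightarrow>
     set w \<subseteq> A \<and> avoids_XYXYX w \<and> (\<forall>v. is_extension A w v \<longrightarrow> contains_XYXYX v)"

end

theory Submission
  imports Defs "HOL-Combinatorics.Multiset_Permutations"
begin

text \<open>A word contains \<open>XY\<^sub>1XY\<^sub>2X\<close> iff some letter occurs at three positions \<open>i, j, l\<close> with
  \<open>i + 2 \<le> j\<close> and \<open>j + 2 \<le> l\<close> (take \<open>X\<close> to be that single letter).  In an extremal word,
  inserting a second copy of a letter right after one of its occurrences cannot create this
  configuration for any other letter, so it must create it for the inserted letter itself; this
  forces the occurrences of every letter to form two blocks \<open>yy \<dots> yy\<close>.  Hence the extremal words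
  are exactly the words \<open>u\<^sub>1u\<^sub>1u\<^sub>2u\<^sub>2\<dots>\<close> obtained by doubling every letter of an arrangement \<open>u\<close>
  of the multiset in which each letter of the alphabet occurs twice; conversely every such word
  avoids the pattern, and every extension has a letter five times, which always yields the
  configuration.  There are \<open>(2k)!/2\<^sup>k\<close> such arrangements.\<close>

definition positions :: "'a list \<Rightarrow> 'a \<Rightarrow> nat set" where
  "positions w z = {i. i < length w \<and> w ! i = z}"

lemma finite_positions [simp]: "finite (positions w z)"
  unfolding positions_def by simp

lemma card_positions: "card (positions w z) = count (mset w) z"
  by (simp add: positions_def count_mset count_list_eq_length_filter length_filter_conv_card
      eq_commute)

definition spaced_triple :: "nat set \<Rightarrow> bool" where
  "spaced_triple P \<longleftrightarrow> (\<exists>i j l. i \<in> P \<and> j \<in> P \<and> l \<in> P \<and> i + 2 \<le> j \<and> j + 2 \<le> l)"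

lemma spaced_triple_mono: "spaced_triple P \<Longrightarrow> P \<subseteq> Q \<Longrightarrow> spaced_triple Q"
  unfolding spaced_triple_def by blast

lemma spaced_triple_image:
  assumes "spaced_triple P" "g ` P \<subseteq> Q"
    and "\<And>i j. i \<in> P \<Longrightarrow> j \<in> P \<Longrightarrow> i + 2 \<le> j \<Longrightarrow> g i + 2 \<le> g j"
  shows "spaced_triple Q"
  using assms unfolding spaced_triple_def by (metis image_subset_iff)

lemma spaced_triple_if_card_ge_5:
  assumes "finite P" "card P \<ge> 5"
  shows "spaced_triple P"
proof -
  define xs where "xs = sorted_list_of_set P"
  have xs: "sorted_wrt (<) xs" "length xs = card P" "set xs = P"
    using assms(1) by (simp_all add: xs_def)
  have "xs ! 0 < xs ! 1" "xs ! 1 < xs ! 2" "xs ! 2 < xs ! 3" "xs ! 3 < xs ! 4"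
    using assms(2) xs by (auto intro: sorted_wrt_nth_less)
  moreover have "xs ! 0 \<in> P" "xs ! 2 \<in> P" "xs ! 4 \<in> P"
    using assms(2) xs by (auto intro: nth_mem)
  ultimately show ?thesis
    unfolding spaced_triple_def by (intro exI[of _ "xs ! 0"] exI[of _ "xs ! 2"] exI[of _ "xs ! 4"]) auto
qed

lemma not_spaced_triple_singleton: "\<not> spaced_triple {a}"
  by (auto simp: spaced_triple_def)

lemma drop_eq_take_append_nth_drop:
  "m \<le> n \<Longrightarrow> n < length w \<Longrightarrow> drop m w = take (n - m) (drop m w) @ w ! n # drop (Suc n) w"
  by (metis Cons_nth_drop_Suc append_take_drop_id drop_drop le_add_diff_inverse2)

lemma contains_XYXYX_iff_spaced_triple:
  "contains_XYXYX w \<longleftrightarrow> (\<exists>z. spaced_triple (positions w z))"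
proof
  assume "contains_XYXYX w"
  then obtain a b1 b2 w1 w2 where ne: "a \<noteq> []" "b1 \<noteq> []" "b2 \<noteq> []"
    and w: "w = w1 @ (a @ b1 @ a @ b2 @ a) @ w2"
    unfolding contains_XYXYX_def is_factor_def by blast
  define i where "i = length w1"
  define j where "j = i + length a + length b1"
  define l where "l = j + length a + length b2"
  have "w ! i = hd a" "w ! j = hd a" "w ! l = hd a" "l < length w"
    unfolding l_def j_def i_def w using ne by (simp_all add: nth_append hd_conv_nth)
  moreover have "0 < length a" "0 < length b1" "0 < length b2"
    using ne by simp_all
  then have "i + 2 \<le> j" "j + 2 \<le> l"
    unfolding l_def j_def by linarith+
  ultimately have "spaced_triple (positions w (hd a))"
    unfolding spaced_triple_def positions_def
    by (intro exI[of _ i] exI[of _ j] exI[of _ l]) auto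
  then show "\<exists>z. spaced_triple (positions w z)" by blast
next
  assume "\<exists>z. spaced_triple (positions w z)"
  then obtain z i j l where ijl: "i + 2 \<le> j" "j + 2 \<le> l" "l < length w"
    and z: "w ! i = z" "w ! j = z" "w ! l = z"
    unfolding spaced_triple_def positions_def by blast
  define b1 where "b1 = take (j - Suc i) (drop (Suc i) w)"
  define b2 where "b2 = take (l - Suc j) (drop (Suc j) w)"
  have "w = take i w @ [z] @ drop (Suc i) w"
    using ijl z drop_eq_take_append_nth_drop[of 0 i w] by simp
  moreover have "drop (Suc i) w = b1 @ [z] @ drop (Suc j) w"
    using ijl z drop_eq_take_append_nth_drop[of "Suc i" j w] unfolding b1_def by simp
  moreover have "drop (Suc j) w = b2 @ [z] @ drop (Suc l) w"
    using ijl z drop_eq_take_append_nth_drop[of "Suc j" l w] unfolding b2_def by simp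
  ultimately have "w = take i w @ ([z] @ b1 @ [z] @ b2 @ [z]) @ drop (Suc l) w"
    by simp
  moreover have "b1 \<noteq> []" "b2 \<noteq> []"
    unfolding b1_def b2_def using ijl by auto
  ultimately show "contains_XYXYX w"
    unfolding contains_XYXYX_def is_factor_def by blast
qed

lemma avoids_XYXYX_iff: "avoids_XYXYX w \<longleftrightarrow> (\<forall>z. \<not> spaced_triple (positions w z))"
  unfolding avoids_XYXYX_def contains_XYXYX_iff_spaced_triple by blast

definition insert_nth :: "nat \<Rightarrow> 'a \<Rightarrow> 'a list \<Rightarrow> 'a list" where
  "insert_nth q y w = take q w @ y # drop q w"

lemma length_insert_nth [simp]: "q \<le> length w \<Longrightarrow> length (insert_nth q y w) = Suc (length w)"
  unfolding insert_nth_def by simp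

lemma nth_insert_nth:
  "q \<le> length w \<Longrightarrow> i \<le> length w \<Longrightarrow>
    insert_nth q y w ! i = (if i < q then w ! i else if i = q then y else w ! (i - 1))"
  unfolding insert_nth_def by (auto simp: nth_append min_def nth_Cons')

lemma is_extension_insert_nth: "q \<le> length w \<Longrightarrow> y \<in> A \<Longrightarrow> is_extension A w (insert_nth q y w)"
  unfolding is_extension_def insert_nth_def
  by (intro exI[of _ "take q w"] exI[of _ "drop q w"] exI[of _ y]) simp

text \<open>Removing the inserted letter shrinks only gaps that straddle it, and such a gap between two
  occurrences of \<open>z\<close> still has length at least two because the letter just before the insertion
  point is not \<open>z\<close>.\<close>

lemma spaced_triple_positions_insert_nth_other:
  assumes q: "q \<le> length w" and after_y: "q = 0 \<or> w ! (q - 1) = y" and "z \<noteq> y"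
    and "spaced_triple (positions (insert_nth q y w) z)"
  shows "spaced_triple (positions w z)"
proof (rule spaced_triple_image[where g = "\<lambda>i. if i < q then i else i - 1"])
  show "spaced_triple (positions (insert_nth q y w) z)" by fact
  show "(\<lambda>i. if i < q then i else i - 1) ` positions (insert_nth q y w) z \<subseteq> positions w z"
    using q \<open>z \<noteq> y\<close> by (auto simp: positions_def nth_insert_nth split: if_splits)
next
  fix i j
  assume i: "i \<in> positions (insert_nth q y w) z" and j: "j \<in> positions (insert_nth q y w) z"
    and "i + 2 \<le> j"
  have "i \<noteq> q" "j \<noteq> q"
    using i j q \<open>z \<noteq> y\<close> by (auto simp: positions_def nth_insert_nth)
  moreover have "i \<noteq> q - 1 \<or> q = 0"
    using i q after_y \<open>z \<noteq> y\<close> by (cases q) (auto simp: positions_def nth_insert_nth)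
  ultimately show "(if i < q then i else i - 1) + 2 \<le> (if j < q then j else j - 1)"
    using \<open>i + 2 \<le> j\<close> by auto
qed

lemma positions_insert_nth_fresh: "y \<notin> set w \<Longrightarrow> positions (insert_nth 0 y w) y \<subseteq> {0}"
  by (auto simp: positions_def nth_insert_nth in_set_conv_nth less_Suc_eq_0_disj)

definition duplicate_after :: "nat set \<Rightarrow> nat \<Rightarrow> nat set" where
  "duplicate_after P p = {i \<in> P. i \<le> p} \<union> {Suc p} \<union> Suc ` {i \<in> P. p < i}"

lemma positions_insert_nth_after:
  assumes "p < length w" "w ! p = y"
  shows "positions (insert_nth (Suc p) y w) y \<subseteq> duplicate_after (positions w y) p"
proof
  fix i
  assume i: "i \<in> positions (insert_nth (Suc p) y w) y"
  consider "i \<le> p" | "i = Suc p" | "p < i - 1" "i = Suc (i - 1)"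
    by linarith
  then show "i \<in> duplicate_after (positions w y) p"
  proof cases
    case 3
    then have "i - 1 \<in> positions w y"
      using i assms by (auto simp: positions_def nth_insert_nth split: if_splits)
    with 3 show ?thesis
      unfolding duplicate_after_def by blast
  qed (use i assms in \<open>auto simp: positions_def duplicate_after_def nth_insert_nth\<close>)
qed

lemma spaced_triple_duplicate_after_isolated:
  assumes "p \<in> P" "\<And>i. i \<in> P \<Longrightarrow> Suc i \<noteq> p" "Suc p \<notin> P"
    and "spaced_triple (duplicate_after P p)"
  shows "spaced_triple P"
proof (rule spaced_triple_image[where g = "\<lambda>i. if i \<le> p then i else i - 1"])
  show "spaced_triple (duplicate_after P p)" by fact
  show "(\<lambda>i. if i \<le> p then i else i - 1) ` duplicate_after P p \<subseteq> P"
    using assms(1) by (auto simp: duplicate_after_def)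
next
  fix i j
  assume "i \<in> duplicate_after P p" "j \<in> duplicate_after P p" "i + 2 \<le> j"
  moreover have "j \<noteq> Suc (Suc p)"
    using \<open>j \<in> duplicate_after P p\<close> assms(3) by (auto simp: duplicate_after_def)
  moreover have "i \<noteq> p - 1 \<or> p = 0"
    using \<open>i \<in> duplicate_after P p\<close> assms(2) by (cases p) (auto simp: duplicate_after_def)
  ultimately show "(if i \<le> p then i else i - 1) + 2 \<le> (if j \<le> p then j else j - 1)"
    by auto
qed

lemma not_spaced_triple_if_subset_interval:
  assumes "P \<subseteq> {a..a + 3}"
  shows "\<not> spaced_triple P"
proof
  assume "spaced_triple P"
  then obtain i j l where "i \<in> P" "l \<in> P" "i + 2 \<le> j" "j + 2 \<le> l"
    unfolding spaced_triple_def by blast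
  with assms have "a \<le> i" "l \<le> a + 3"
    by auto
  with \<open>i + 2 \<le> j\<close> \<open>j + 2 \<le> l\<close> show False
    by linarith
qed

lemma not_spaced_triple_duplicate_after_short:
  "P \<subseteq> {a..a + 2} \<Longrightarrow> \<not> spaced_triple (duplicate_after P a)"
  by (rule not_spaced_triple_if_subset_interval[of _ a]) (auto simp: duplicate_after_def)

lemma two_dominoes_if_saturated:
  assumes fin: "finite P" and "P \<noteq> {}" and no_triple: "\<not> spaced_triple P"
    and saturated: "\<And>p. p \<in> P \<Longrightarrow> spaced_triple (duplicate_after P p)"
  shows "\<exists>a b. a + 2 \<le> b \<and> P = {a, Suc a, b, Suc b}"
proof -
  define a where "a = Min P"
  define m where "m = Max P"
  have a: "a \<in> P" "\<And>x. x \<in> P \<Longrightarrow> a \<le> x"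
    using fin \<open>P \<noteq> {}\<close> by (auto simp: a_def)
  have m: "m \<in> P" "\<And>x. x \<in> P \<Longrightarrow> x \<le> m"
    using fin \<open>P \<noteq> {}\<close> by (auto simp: m_def)
  have "a + 3 \<le> m"
  proof (rule ccontr)
    assume "\<not> a + 3 \<le> m"
    then have "P \<subseteq> {a..a + 2}"
      using a(2) m(2) by fastforce
    then show False
      using saturated[OF a(1)] not_spaced_triple_duplicate_after_short by blast
  qed
  have "Suc a \<in> P"
  proof (rule ccontr)
    assume "Suc a \<notin> P"
    moreover have "Suc i \<noteq> a" if "i \<in> P" for i
      using a(2)[OF that] by linarith
    ultimately show False
      using spaced_triple_duplicate_after_isolated[OF a(1) _ _ saturated[OF a(1)]] no_triple
      by blast
  qed
  have "m - 1 \<in> P"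
  proof (rule ccontr)
    assume "m - 1 \<notin> P"
    then have "Suc i \<noteq> m" if "i \<in> P" for i
      using that by (metis diff_Suc_1)
    moreover have "Suc m \<notin> P"
      using m(2) by fastforce
    ultimately show False
      using spaced_triple_duplicate_after_isolated[OF m(1) _ _ saturated[OF m(1)]] no_triple
      by blast
  qed
  define b where "b = m - 1"
  have b: "m = Suc b" "a + 2 \<le> b"
    using \<open>a + 3 \<le> m\<close> unfolding b_def by linarith+
  have "x \<in> {a, Suc a, b, Suc b}" if "x \<in> P" for x
  proof (rule ccontr)
    assume "x \<notin> {a, Suc a, b, Suc b}"
    then have "a + 2 \<le> x" "x + 2 \<le> m"
      using a(2)[OF that] m(2)[OF that] b(1) by auto
    then show False
      using no_triple a(1) m(1) that unfolding spaced_triple_def by blast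
  qed
  moreover have "{a, Suc a, b, Suc b} \<subseteq> P"
    using a(1) m(1) \<open>Suc a \<in> P\<close> \<open>m - 1 \<in> P\<close> b(1) unfolding b_def by simp
  ultimately show ?thesis
    using b(2) by blast
qed

lemma extremal_insert_nth_spaced_triple:
  assumes ext: "extremal_XYXYX A w" and "y \<in> A" and q: "q \<le> length w"
    and after_y: "q = 0 \<or> w ! (q - 1) = y"
  shows "spaced_triple (positions (insert_nth q y w) y)"
proof -
  have "contains_XYXYX (insert_nth q y w)"
    using ext is_extension_insert_nth[OF q \<open>y \<in> A\<close>] unfolding extremal_XYXYX_def by blast
  then obtain z where z: "spaced_triple (positions (insert_nth q y w) z)"
    unfolding contains_XYXYX_iff_spaced_triple by blast
  have "\<not> spaced_triple (positions w z)"
    using ext unfolding extremal_XYXYX_def avoids_XYXYX_iff by blast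
  then have "z = y"
    using spaced_triple_positions_insert_nth_other[OF q after_y _ z] by blast
  with z show ?thesis by simp
qed

lemma extremal_letter_occurs:
  assumes "extremal_XYXYX A w" "y \<in> A"
  shows "y \<in> set w"
proof (rule ccontr)
  assume "y \<notin> set w"
  then have "positions (insert_nth 0 y w) y \<subseteq> {0}"
    by (rule positions_insert_nth_fresh)
  moreover have "spaced_triple (positions (insert_nth 0 y w) y)"
    using extremal_insert_nth_spaced_triple[OF assms] by simp
  ultimately show False
    using spaced_triple_mono not_spaced_triple_singleton by blast
qed

lemma extremal_positions_two_dominoes:
  assumes ext: "extremal_XYXYX A w" and "y \<in> A"
  shows "\<exists>a b. a + 2 \<le> b \<and> positions w y = {a, Suc a, b, Suc b}"
proof (rule two_dominoes_if_saturated)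
  show "finite (positions w y)" by simp
  show "positions w y \<noteq> {}"
    using extremal_letter_occurs[OF assms] by (auto simp: positions_def in_set_conv_nth)
  show "\<not> spaced_triple (positions w y)"
    using ext unfolding extremal_XYXYX_def avoids_XYXYX_iff by blast
next
  fix p
  assume "p \<in> positions w y"
  then have "p < length w" "w ! p = y"
    by (auto simp: positions_def)
  then show "spaced_triple (duplicate_after (positions w y) p)"
    using extremal_insert_nth_spaced_triple[OF assms, of "Suc p"]
      positions_insert_nth_after spaced_triple_mono by fastforce
qed

definition double_word :: "'a list \<Rightarrow> 'a list" where
  "double_word u = concat (map (\<lambda>x. [x, x]) u)"

lemma double_word_Nil [simp]: "double_word [] = []"
  and double_word_Cons [simp]: "double_word (x # u) = x # x # double_word u"
  by (simp_all add: double_word_def)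

lemma length_double_word [simp]: "length (double_word u) = 2 * length u"
  by (induction u) auto

lemma nth_double_word: "i < 2 * length u \<Longrightarrow> double_word u ! i = u ! (i div 2)"
proof (induction u arbitrary: i)
  case (Cons x u)
  consider "i = 0" | "i = 1" | j where "i = Suc (Suc j)"
    by (metis One_nat_def not0_implies_Suc)
  then show ?case
    by cases (use Cons in auto)
qed simp

lemma inj_double_word: "inj double_word"
proof (rule injI)
  fix u v :: "'a list"
  show "double_word u = double_word v \<Longrightarrow> u = v"
  proof (induction u arbitrary: v)
    case Nil
    then show ?case by (cases v) auto
  next
    case (Cons x u)
    then show ?case by (cases v) auto
  qed
qed

lemma set_double_word [simp]: "set (double_word u) = set u"
  by (induction u) auto

lemma count_mset_double_word [simp]: "count (mset (double_word u)) x = 2 * count (mset u) x"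
  by (induction u) auto

text \<open>The one-domino case only arises as an intermediate stage of the induction in
  \<open>double_word_if_dominoes\<close>, after the first domino of a letter has been removed.\<close>

definition at_most_two_dominoes :: "nat set \<Rightarrow> bool" where
  "at_most_two_dominoes S \<longleftrightarrow>
     S = {} \<or> (\<exists>a. S = {a, Suc a}) \<or> (\<exists>a b. a + 2 \<le> b \<and> S = {a, Suc a, b, Suc b})"

lemma at_most_two_dominoes_shift:
  assumes "at_most_two_dominoes S" and "0 \<in> S \<longleftrightarrow> Suc 0 \<in> S"
  shows "at_most_two_dominoes {i. Suc (Suc i) \<in> S}"
  using assms(1) unfolding at_most_two_dominoes_def[of S]
proof (elim disjE exE conjE)
  assume "S = {}"
  then show ?thesis
    unfolding at_most_two_dominoes_def by simp
next
  fix a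
  assume S: "S = {a, Suc a}"
  show ?thesis
  proof (cases "a = 0")
    case False
    then have "a \<ge> 2"
      using S assms(2) by (cases a) auto
    then have "{i. Suc (Suc i) \<in> S} = {a - 2, Suc (a - 2)}"
      using S by auto
    then show ?thesis
      unfolding at_most_two_dominoes_def by blast
  qed (use S in \<open>auto simp: at_most_two_dominoes_def\<close>)
next
  fix a b
  assume ab: "a + 2 \<le> b" and S: "S = {a, Suc a, b, Suc b}"
  show ?thesis
  proof (cases "a = 0")
    case True
    then have "{i. Suc (Suc i) \<in> S} = {b - 2, Suc (b - 2)}"
      using S ab by auto
    then show ?thesis
      unfolding at_most_two_dominoes_def by blast
  next
    case False
    then have "a \<ge> 2"
      using S ab assms(2) by (cases a) auto
    then have "{i. Suc (Suc i) \<in> S} = {a - 2, Suc (a - 2), b - 2, Suc (b - 2)}"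
      and "a - 2 + 2 \<le> b - 2"
      using S ab by auto
    then show ?thesis
      unfolding at_most_two_dominoes_def by blast
  qed
qed

lemma double_word_if_dominoes:
  "(\<And>y. at_most_two_dominoes (positions w y)) \<Longrightarrow> \<exists>u. w = double_word u"
proof (induction w rule: length_induct)
  case (1 w)
  show ?case
  proof (cases w)
    case Nil
    then show ?thesis
      by (metis double_word_Nil)
  next
    case (Cons y w1)
    then have "0 \<in> positions w y"
      by (simp add: positions_def)
    then have "Suc 0 \<in> positions w y"
      using "1.prems"[of y] unfolding at_most_two_dominoes_def by auto
    then obtain w2 where w: "w = y # y # w2"
      using Cons by (cases w1) (auto simp: positions_def)
    have "at_most_two_dominoes (positions w2 z)" for z
    proof -
      have "positions w2 z = {i. Suc (Suc i) \<in> positions w z}"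
        using w by (auto simp: positions_def)
      moreover have "0 \<in> positions w z \<longleftrightarrow> Suc 0 \<in> positions w z"
        using w by (auto simp: positions_def)
      ultimately show ?thesis
        using at_most_two_dominoes_shift[OF "1.prems"] by simp
    qed
    then obtain u where "w2 = double_word u"
      using "1.IH" w by force
    with w have "w = double_word (y # u)"
      by simp
    then show ?thesis ..
  qed
qed

lemma extremal_XYXYX_imp_double_word:
  assumes "finite A" and ext: "extremal_XYXYX A w"
  shows "\<exists>u. w = double_word u \<and> mset u = mset_set A + mset_set A"
proof -
  have letters: "set w \<subseteq> A"
    using ext by (simp add: extremal_XYXYX_def)
  have "at_most_two_dominoes (positions w y)" for y
  proof (cases "y \<in> A")
    case True
    then show ?thesis
      using extremal_positions_two_dominoes[OF ext] unfolding at_most_two_dominoes_def by blast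
  next
    case False
    then have "positions w y = {}"
      using letters by (auto simp: positions_def dest: nth_mem)
    then show ?thesis
      unfolding at_most_two_dominoes_def by simp
  qed
  then obtain u where u: "w = double_word u"
    using double_word_if_dominoes by blast
  have "count (mset u) y = count (mset_set A + mset_set A) y" for y
  proof (cases "y \<in> A")
    case True
    then obtain a b where "a + 2 \<le> b" "positions w y = {a, Suc a, b, Suc b}"
      using extremal_positions_two_dominoes[OF ext] by blast
    then have "card (positions w y) = 4"
      by simp
    then show ?thesis
      using card_positions[of w y] u True \<open>finite A\<close> by (simp add: count_mset_set)
  next
    case False
    then have "y \<notin> set u"
      using letters u by auto
    then show ?thesis
      using False \<open>finite A\<close> by (simp add: count_mset_set count_mset_0_iff)
  qed
  then show ?thesis
    using u multiset_eqI by blast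
qed

lemma extremal_XYXYX_double_word:
  assumes "finite A" and u: "mset u = mset_set A + mset_set A"
  shows "extremal_XYXYX A (double_word u)"
proof -
  have count_u: "count (mset u) y = (if y \<in> A then 2 else 0)" for y
    using u \<open>finite A\<close> by (simp add: count_mset_set)
  have "set u = A"
    using arg_cong[OF u, of set_mset] \<open>finite A\<close> by simp
  moreover have "\<not> spaced_triple (positions (double_word u) y)" for y
  proof
    assume "spaced_triple (positions (double_word u) y)"
    then obtain i j l where ijl: "i \<in> positions (double_word u) y" "j \<in> positions (double_word u) y"
      "l \<in> positions (double_word u) y" "i + 2 \<le> j" "j + 2 \<le> l"
      unfolding spaced_triple_def by blast
    have halve: "n div 2 \<in> positions u y" if "n \<in> positions (double_word u) y" for n
      using that nth_double_word[of n u] by (auto simp: positions_def)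
    have "i div 2 < j div 2" "j div 2 < l div 2"
      using ijl(4,5) by linarith+
    then have "card {i div 2, j div 2, l div 2} = 3"
      by simp
    moreover have "{i div 2, j div 2, l div 2} \<subseteq> positions u y"
      using ijl halve by blast
    ultimately have "3 \<le> card (positions u y)"
      by (metis card_mono finite_positions)
    moreover have "card (positions u y) \<le> 2"
      using count_u[of y] by (simp add: card_positions)
    ultimately show False
      by linarith
  qed
  moreover have "contains_XYXYX v" if "is_extension A (double_word u) v" for v
  proof -
    from that obtain w1 w2 x
      where split: "double_word u = w1 @ w2" and "x \<in> A" and v: "v = w1 @ [x] @ w2"
      unfolding is_extension_def by auto
    have "count (mset v) x = Suc (count (mset (double_word u)) x)"
      unfolding v split by simp
    also have "\<dots> = 5"
      using count_u[of x] \<open>x \<in> A\<close> by simp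
    finally have "card (positions v x) = 5"
      by (simp add: card_positions)
    then have "spaced_triple (positions v x)"
      by (intro spaced_triple_if_card_ge_5) simp_all
    then show ?thesis
      unfolding contains_XYXYX_iff_spaced_triple ..
  qed
  ultimately show ?thesis
    unfolding extremal_XYXYX_def avoids_XYXYX_iff by simp
qed

lemma extremal_XYXYX_iff_double_word:
  "finite A \<Longrightarrow>
    extremal_XYXYX A w \<longleftrightarrow> (\<exists>u. w = double_word u \<and> mset u = mset_set A + mset_set A)"
  using extremal_XYXYX_imp_double_word extremal_XYXYX_double_word by blast

lemma card_permutations_of_doubled_set:
  assumes "finite A"
  shows "card (permutations_of_multiset (mset_set A + mset_set A)) * 2 ^ card A = fact (2 * card A)"
proof -
  let ?M = "mset_set A + mset_set A"
  have "(\<Prod>x\<in>set_mset ?M. fact (count ?M x)) = (\<Prod>x\<in>A. 2 :: nat)"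
    using assms by (intro prod.cong) (auto simp: count_mset_set)
  moreover have "size ?M = 2 * card A"
    using assms by simp
  ultimately show ?thesis
    using card_permutations_of_multiset_aux[of ?M] by (simp only: prod_constant)
qed

theorem mainTheorem4:
  fixes A :: "'a set" and k :: nat
  assumes "k > 0" and "finite A" and "card A = k"
  shows "finite {w. extremal_XYXYX A w} \<and>
         real (card {w. extremal_XYXYX A w}) = real (fact (2 * k)) / (2::real) ^ k"
proof -
  let ?P = "permutations_of_multiset (mset_set A + mset_set A)"
  have extremal_words: "{w. extremal_XYXYX A w} = double_word ` ?P"
    using extremal_XYXYX_iff_double_word[OF \<open>finite A\<close>]
    by (auto simp: permutations_of_multiset_def)
  have "card {w. extremal_XYXYX A w} * 2 ^ k = fact (2 * k)"
    unfolding extremal_words card_image[OF inj_on_subset[OF inj_double_word subset_UNIV]]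
    using card_permutations_of_doubled_set[OF \<open>finite A\<close>] \<open>card A = k\<close> by simp
  then have "real (card {w. extremal_XYXYX A w} * 2 ^ k) = real (fact (2 * k))"
    by (simp only:)
  then show ?thesis
    unfolding extremal_words by (simp add: field_simps)
qed

end
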